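(* For every $\alpha\in(0,\pi/2)$ and every good input, the cost of the Straight-Up algorithm equals $\cot\alpha$.
   Context: A drone with half angle-of-view $\alpha\in(0,\pi/2)$ at a point $(t_x,t_y)$, $t_y\ge0$, covers $[t_x-t_y\tan\alpha,t_x+t_y\tan\alpha]$ on the $x$-axis. An input is a sequence $X_0=(0,0),X_1,\dots,X_n$ ($n\ge1$) of points $X_i=(x_i,0)$ revealed online. A solution is a sequence of positions $P_0=(0,0),P_1,\dots,P_n$ in the closed upper half-plane with $P_i$ covering $X_0,\dots,X_i$; its cost is $\sum_i|P_iP_{i+1}|$. A request $X_{i+1}$ is redundant if $x_{i+1}\in[\min_{j\le i}x_j,\max_{j\le i}x_j]$. An input is good if it has no redundant requests, $\min_j x_j=-1$ and $\max_j x_j\in[0,1]$. The Straight-Up algorithm sets $P_i$ to be the lowest point of the $y$-axis that covers $X_0,\dots,X_i$. *)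

theory Defs
  imports "HOL-Analysis.Analysis"
begin

text \<open>Points of the plane are pairs (x, y) :: real \<times> real; dist on pairs is the
Euclidean distance. Requests are X_i = (x i, 0), given by x :: nat \<Rightarrow> real.\<close>

definition covers :: "real \<Rightarrow> real \<times> real \<Rightarrow> real \<Rightarrow> bool" where
  "covers \<alpha> T p \<longleftrightarrow> snd T \<ge> 0 \<and>
     fst T - snd T * tan \<alpha> \<le> p \<and> p \<le> fst T + snd T * tan \<alpha>"

definition redundant :: "(nat \<Rightarrow> real) \<Rightarrow> nat \<Rightarrow> bool" where
  "redundant x i \<longleftrightarrow>
     x (Suc i) \<in> {Min (x ` {0..i}) .. Max (x ` {0..i})}"

definition good_input :: "(nat \<Rightarrow> real) \<Rightarrow> nat \<Rightarrow> bool" where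
  "good_input x n \<longleftrightarrow> n \<ge> 1 \<and> x 0 = 0 \<and>
     (\<forall>i<n. \<not> redundant x i) \<and>
     Min (x ` {0..n}) = -1 \<and> Max (x ` {0..n}) \<in> {0..1}"

definition cost :: "(nat \<Rightarrow> real \<times> real) \<Rightarrow> nat \<Rightarrow> real" where
  "cost P n = (\<Sum>i<n. dist (P i) (P (Suc i)))"

definition straight_up :: "real \<Rightarrow> (nat \<Rightarrow> real) \<Rightarrow> nat \<Rightarrow> real \<times> real" where
  "straight_up \<alpha> x i = (0, Inf {h. \<forall>j\<le>i. covers \<alpha> (0, h) (x j)})"

end

theory Submission
  imports Defs
begin

text \<open>Straight-Up only moves vertically, and its height after request i is the
maximum of \<open>\<bar>x j\<bar> / tan \<alpha>\<close> over \<open>j \<le> i\<close>, which is nondecreasing in i. Hence its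
cost telescopes to the final height minus the initial one, \<open>1 / tan \<alpha> - 0 = cot \<alpha>\<close>.\<close>

lemma covers_on_axis_iff:
  assumes "tan \<alpha> > 0"
  shows "covers \<alpha> (0, h) p \<longleftrightarrow> \<bar>p\<bar> / tan \<alpha> \<le> h"
proof -
  have "0 \<le> h" if "\<bar>p\<bar> \<le> h * tan \<alpha>"
    using that assms by (smt (verit) zero_le_mult_iff)
  then have "covers \<alpha> (0, h) p \<longleftrightarrow> \<bar>p\<bar> \<le> h * tan \<alpha>"
    by (auto simp: covers_def abs_le_iff)
  also have "\<dots> \<longleftrightarrow> \<bar>p\<bar> / tan \<alpha> \<le> h"
    using assms by (simp add: divide_le_eq)
  finally show ?thesis .
qed

lemma straight_up_eq:
  assumes "tan \<alpha> > 0"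
  shows "straight_up \<alpha> x i = (0, Max ((\<lambda>j. \<bar>x j\<bar>) ` {0..i}) / tan \<alpha>)"
proof -
  let ?M = "Max ((\<lambda>j. \<bar>x j\<bar>) ` {0..i})"
  have "{h. \<forall>j\<le>i. covers \<alpha> (0, h) (x j)} = {h. \<forall>j\<le>i. \<bar>x j\<bar> / tan \<alpha> \<le> h}"
    by (simp add: covers_on_axis_iff[OF assms])
  also have "\<dots> = {h. ?M \<le> h * tan \<alpha>}"
    using assms by (auto simp: divide_le_eq)
  also have "\<dots> = {?M / tan \<alpha>..}"
    using assms by (auto simp: divide_le_eq)
  finally show ?thesis
    by (simp add: straight_up_def cInf_atLeast)
qed

lemma cost_vertical_mono:
  assumes "\<And>i. h i \<le> h (Suc i)"
  shows "cost (\<lambda>i. (0, h i)) n = h n - h 0"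
proof -
  have "cost (\<lambda>i. (0, h i)) n = (\<Sum>i<n. h (Suc i) - h i)"
    unfolding cost_def using assms
    by (intro sum.cong) (auto simp: dist_Pair_Pair dist_real_def)
  also have "\<dots> = h n - h 0"
    by (rule sum_lessThan_telescope)
  finally show ?thesis .
qed

lemma good_input_Max_abs:
  assumes "good_input x n"
  shows "Max ((\<lambda>j. \<bar>x j\<bar>) ` {0..n}) = 1"
proof -
  have lo: "Min (x ` {0..n}) = -1" and hi: "Max (x ` {0..n}) \<le> 1"
    using assms by (auto simp: good_input_def)
  have "-1 \<in> x ` {0..n}"
    unfolding lo[symmetric] by (rule Min_in) auto
  then obtain k where "k \<le> n" "\<bar>x k\<bar> = 1"
    by auto
  moreover have "\<bar>x j\<bar> \<le> 1" if "j \<le> n" for j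
    using that Min_le[of "x ` {0..n}" "x j"] Max_ge[of "x ` {0..n}" "x j"] lo hi
    by (auto simp: abs_le_iff)
  ultimately show ?thesis
    by (intro Max_eqI) auto
qed

theorem lemma3:
  fixes \<alpha> :: real and x :: "nat \<Rightarrow> real" and n :: nat
  assumes "0 < \<alpha>" and "\<alpha> < pi / 2"
    and "good_input x n"
  shows "cost (straight_up \<alpha> x) n = cot \<alpha>"
proof -
  have tan_pos: "tan \<alpha> > 0"
    using assms by (simp add: tan_gt_zero)
  define M where "M i = Max ((\<lambda>j. \<bar>x j\<bar>) ` {0..i})" for i
  have "M i / tan \<alpha> \<le> M (Suc i) / tan \<alpha>" for i
    unfolding M_def using tan_pos by (intro divide_right_mono Max_mono) auto
  then have "cost (straight_up \<alpha> x) n = M n / tan \<alpha> - M 0 / tan \<alpha>"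
    unfolding straight_up_eq[OF tan_pos, abs_def] M_def[symmetric]
    by (rule cost_vertical_mono)
  moreover have "M 0 = 0"
    using assms(3) by (simp add: M_def good_input_def)
  moreover have "M n = 1"
    unfolding M_def using assms(3) by (rule good_input_Max_abs)
  ultimately show ?thesis
    by (simp add: cot_def tan_def)
qed

end
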